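(* Let $X_N=V_q\otimes W_p$ with $V_q\subset H^1_0(D)$ and $W_p\subset L^2_\Gamma(\mathbb{R}^\mu)$. If $\gamma\in L^r_\Gamma(\mathbb{R}^\mu)$ and $W_p\subset L^s_\Gamma(\mathbb{R}^\mu)$ for some $r\ge1$ and $s\ge2$ with $\frac{2}{s}+\frac{1}{r}=1$, then $X_N\subset X^{(\gamma)}$. In particular, $X_N\subset X^{(\gamma)}$ if $\gamma\in L^1_\Gamma(\mathbb{R}^\mu)$ and $W_p\subset L^\infty_\Gamma(\mathbb{R}^\mu)$.
   Context: $D\subset\mathbb{R}^d$ bounded open; $\Gamma$ a probability measure on $\mathbb{R}^\mu$, $E_\Gamma$ integration against it; $\gamma:\mathbb{R}^\mu\to\mathbb{R}$ a positive measurable function (in the paper, the upper bound of the coefficient field). $X^{(\gamma)}$ is the space of functions $v:D\times\mathbb{R}^\mu\to\mathbb{R}$ with $\|v\|_{X^{(\gamma)}}^2=E_\Gamma(\gamma\int_D\|\nabla v\|_2^2d\mathbf{x})<\infty$. *)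

theory Defs
  imports "HOL-Probability.Probability"
begin

fun dirderivs :: "('a::euclidean_space \<Rightarrow> real) \<Rightarrow> 'a list \<Rightarrow> ('a \<Rightarrow> real)" where
  "dirderivs f [] = f"
| "dirderivs f (e # es) = (\<lambda>x. frechet_derivative (dirderivs f es) (at x) e)"

definition smooth_fun :: "('a::euclidean_space \<Rightarrow> real) \<Rightarrow> bool" where
  "smooth_fun f \<longleftrightarrow> (\<forall>es x. dirderivs f es differentiable (at x))"

definition test_fun :: "'a::euclidean_space set \<Rightarrow> ('a \<Rightarrow> real) \<Rightarrow> bool" where
  "test_fun D \<phi> \<longleftrightarrow> smooth_fun \<phi> \<and> compact (closure {x. \<phi> x \<noteq> 0})
      \<and> closure {x. \<phi> x \<noteq> 0} \<subseteq> D"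

definition grad :: "('a::euclidean_space \<Rightarrow> real) \<Rightarrow> 'a \<Rightarrow> 'a" where
  "grad f x = (\<Sum>b\<in>Basis. frechet_derivative f (at x) b *\<^sub>R b)"

definition weak_grad :: "'a::euclidean_space set \<Rightarrow> ('a \<Rightarrow> real) \<Rightarrow> ('a \<Rightarrow> 'a) \<Rightarrow> bool" where
  "weak_grad D u g \<longleftrightarrow>
     u \<in> borel_measurable lborel \<and> g \<in> borel_measurable lborel \<and>
     (\<forall>K. compact K \<and> K \<subseteq> D \<longrightarrow> set_integrable lborel K u \<and> set_integrable lborel K g) \<and>
     (\<forall>\<phi>. test_fun D \<phi> \<longrightarrow>
        (\<integral>x\<in>D. u x *\<^sub>R grad \<phi> x \<partial>lborel) = - (\<integral>x\<in>D. \<phi> x *\<^sub>R g x \<partial>lborel))"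

definition H10 :: "'a::euclidean_space set \<Rightarrow> ('a \<Rightarrow> real) \<Rightarrow> bool" where
  "H10 D u \<longleftrightarrow> (\<exists>g. weak_grad D u g \<and>
     (\<integral>\<^sup>+x\<in>D. ennreal ((u x)\<^sup>2) \<partial>lborel) < \<infinity> \<and>
     (\<integral>\<^sup>+x\<in>D. ennreal ((norm (g x))\<^sup>2) \<partial>lborel) < \<infinity> \<and>
     (\<exists>\<phi>. (\<forall>n. test_fun D (\<phi> n)) \<and>
        (\<lambda>n. \<integral>\<^sup>+x\<in>D. ennreal ((\<phi> n x - u x)\<^sup>2) \<partial>lborel) \<longlonglongrightarrow> 0 \<and>
        (\<lambda>n. \<integral>\<^sup>+x\<in>D. ennreal ((norm (grad (\<phi> n) x - g x))\<^sup>2) \<partial>lborel) \<longlonglongrightarrow> 0))"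

definition Lp_Gamma :: "'b measure \<Rightarrow> real \<Rightarrow> ('b \<Rightarrow> real) set" where
  "Lp_Gamma \<Gamma> p = {w. w \<in> borel_measurable \<Gamma> \<and>
       (\<integral>\<^sup>+y. ennreal (\<bar>w y\<bar> powr p) \<partial>\<Gamma>) < \<infinity>}"

definition Linf_Gamma :: "'b measure \<Rightarrow> ('b \<Rightarrow> real) set" where
  "Linf_Gamma \<Gamma> = {w. w \<in> borel_measurable \<Gamma> \<and> (\<exists>C. AE y in \<Gamma>. \<bar>w y\<bar> \<le> C)}"

definition tensor_space :: "('a \<Rightarrow> real) set \<Rightarrow> ('b \<Rightarrow> real) set \<Rightarrow> ('a \<times> 'b \<Rightarrow> real) set" where
  "tensor_space V W = {f. \<exists>(n::nat) c v w. (\<forall>i<n. v i \<in> V \<and> w i \<in> W) \<and>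
       f = (\<lambda>(x,y). \<Sum>i<n. c i * v i x * w i y)}"

definition Xgamma :: "'a::euclidean_space set \<Rightarrow> 'b measure \<Rightarrow> ('b \<Rightarrow> real) \<Rightarrow> ('a \<times> 'b \<Rightarrow> real) set" where
  "Xgamma D \<Gamma> \<gamma> = {v. \<exists>G :: 'a \<times> 'b \<Rightarrow> 'a.
       G \<in> borel_measurable (lborel \<Otimes>\<^sub>M \<Gamma>) \<and>
       (AE y in \<Gamma>. H10 D (\<lambda>x. v (x, y)) \<and> weak_grad D (\<lambda>x. v (x, y)) (\<lambda>x. G (x, y))) \<and>
       (\<integral>\<^sup>+y. ennreal (\<gamma> y) * (\<integral>\<^sup>+x\<in>D. ennreal ((norm (G (x, y)))\<^sup>2) \<partial>lborel) \<partial>\<Gamma>) < \<infinity>}"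

end

theory Submission imports Defs begin

text \<open>For \<open>w = \<Sum>\<^sub>i c\<^sub>i v\<^sub>i \<otimes> w\<^sub>i\<close> in \<open>V \<otimes> W\<close>, every section \<open>w(\<cdot>, y)\<close> is a finite linear
  combination of the \<open>v\<^sub>i \<in> H\<^sup>1\<^sub>0(D)\<close>, hence lies in \<open>H\<^sup>1\<^sub>0(D)\<close> with gradient
  \<open>\<Sum>\<^sub>i c\<^sub>i w\<^sub>i(y) \<nabla>v\<^sub>i\<close>. By Cauchy--Schwarz, \<open>\<integral>\<^sub>D |\<nabla>w(\<cdot>,y)|\<^sup>2 \<le> n \<Sum>\<^sub>i c\<^sub>i\<^sup>2 w\<^sub>i(y)\<^sup>2 \<integral>\<^sub>D |\<nabla>v\<^sub>i|\<^sup>2\<close>,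
  so \<open>E\<^sub>\<Gamma>(\<gamma> \<integral>\<^sub>D |\<nabla>w|\<^sup>2)\<close> is finite as soon as each \<open>E\<^sub>\<Gamma>(\<gamma> w\<^sub>i\<^sup>2)\<close> is. The latter follows from
  Young's inequality \<open>\<gamma> w\<^sup>2 \<le> \<gamma>\<^sup>r/r + |w|\<^sup>s/(s/2)\<close>, the exponents \<open>r\<close> and \<open>s/2\<close> being conjugate,
  or, for bounded \<open>w\<close>, from \<open>\<gamma> w\<^sup>2 \<le> C\<^sup>2 \<gamma>\<close>.\<close>

lemma frechet_derivative_add:
  assumes "f differentiable at x" "g differentiable at x"
  shows "frechet_derivative (\<lambda>x. f x + g x) (at x)
           = (\<lambda>h. frechet_derivative f (at x) h + frechet_derivative g (at x) h)"
  using frechet_derivative_at[OF has_derivative_add[OF assms[unfolded frechet_derivative_works]]]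
  by simp

lemma frechet_derivative_cmult:
  fixes f :: "'a::real_normed_vector \<Rightarrow> real"
  assumes "f differentiable at x"
  shows "frechet_derivative (\<lambda>x. c * f x) (at x) = (\<lambda>h. c * frechet_derivative f (at x) h)"
  using frechet_derivative_at[OF has_derivative_mult_right[OF assms[unfolded frechet_derivative_works]]]
  by simp

lemma smooth_fun_differentiable: "smooth_fun f \<Longrightarrow> f differentiable at x"
  unfolding smooth_fun_def by (metis dirderivs.simps(1))

lemma dirderivs_add:
  assumes "smooth_fun f" "smooth_fun g"
  shows "dirderivs (\<lambda>x. f x + g x) es = (\<lambda>x. dirderivs f es x + dirderivs g es x)"
  using assms by (induction es) (auto simp: frechet_derivative_add smooth_fun_def)

lemma dirderivs_cmult:
  assumes "smooth_fun f"
  shows "dirderivs (\<lambda>x. c * f x) es = (\<lambda>x. c * dirderivs f es x)"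
  using assms by (induction es) (auto simp: frechet_derivative_cmult smooth_fun_def)

lemma smooth_fun_add: "smooth_fun f \<Longrightarrow> smooth_fun g \<Longrightarrow> smooth_fun (\<lambda>x. f x + g x)"
  by (auto simp: smooth_fun_def dirderivs_add)

lemma smooth_fun_cmult: "smooth_fun f \<Longrightarrow> smooth_fun (\<lambda>x. c * f x)"
  by (auto simp: smooth_fun_def dirderivs_cmult)

lemma continuous_on_smooth_fun: "smooth_fun f \<Longrightarrow> continuous_on UNIV f"
  by (meson continuous_at_imp_continuous_on differentiable_imp_continuous_within
      smooth_fun_differentiable)

lemma continuous_on_grad:
  assumes "smooth_fun f"
  shows "continuous_on UNIV (grad f)"
proof -
  have "grad f = (\<lambda>x. \<Sum>b\<in>Basis. dirderivs f [b] x *\<^sub>R b)"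
    by (simp add: grad_def fun_eq_iff)
  moreover have "continuous_on UNIV (dirderivs f [b])" for b
    using assms unfolding smooth_fun_def
    by (meson continuous_at_imp_continuous_on differentiable_imp_continuous_within)
  ultimately show ?thesis
    by (auto intro!: continuous_on_sum continuous_on_scaleR)
qed

lemma grad_add:
  "smooth_fun f \<Longrightarrow> smooth_fun g \<Longrightarrow> grad (\<lambda>x. f x + g x) x = grad f x + grad g x"
  by (simp add: grad_def frechet_derivative_add smooth_fun_differentiable scaleR_add_left sum.distrib)

lemma grad_cmult: "smooth_fun f \<Longrightarrow> grad (\<lambda>x. c * f x) x = c *\<^sub>R grad f x"
  by (simp add: grad_def frechet_derivative_cmult smooth_fun_differentiable scaleR_sum_right)

lemma grad_eq_0_outside_support:
  assumes "smooth_fun f" "x \<notin> closure {x. f x \<noteq> 0}"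
  shows "grad f x = 0"
proof -
  have "frechet_derivative f (at x) = frechet_derivative (\<lambda>x. 0) (at x)"
    using assms smooth_fun_differentiable closure_subset[of "{x. f x \<noteq> 0}"]
    by (intro frechet_derivative_transform_within_open[where X="- closure {x. f x \<noteq> 0}"]) auto
  then show ?thesis by (simp add: grad_def)
qed

lemma test_fun_zero: "test_fun D (\<lambda>x. 0)"
proof -
  have "dirderivs (\<lambda>x. 0) es = (\<lambda>x. 0)" for es :: "'a list"
    by (induction es) auto
  then show ?thesis by (simp add: test_fun_def smooth_fun_def)
qed

lemma test_fun_add:
  assumes "test_fun D f" "test_fun D g"
  shows "test_fun D (\<lambda>x. f x + g x)"
proof -
  have "{x. f x + g x \<noteq> 0} \<subseteq> {x. f x \<noteq> 0} \<union> {x. g x \<noteq> 0}" by auto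
  then have supp: "closure {x. f x + g x \<noteq> 0} \<subseteq> closure {x. f x \<noteq> 0} \<union> closure {x. g x \<noteq> 0}"
    by (metis closure_Un closure_mono)
  moreover have "compact ((closure {x. f x \<noteq> 0} \<union> closure {x. g x \<noteq> 0}) \<inter> closure {x. f x + g x \<noteq> 0})"
    using assms unfolding test_fun_def by (intro compact_Int_closed compact_Un) auto
  ultimately have "compact (closure {x. f x + g x \<noteq> 0})"
    by (simp add: Int_absorb1)
  then show ?thesis
    using assms supp unfolding test_fun_def by (auto intro: smooth_fun_add)
qed

lemma test_fun_cmult:
  assumes "test_fun D f"
  shows "test_fun D (\<lambda>x. c * f x)"
proof -
  have supp: "closure {x. c * f x \<noteq> 0} \<subseteq> closure {x. f x \<noteq> 0}"
    by (intro closure_mono) auto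
  moreover have "compact (closure {x. f x \<noteq> 0} \<inter> closure {x. c * f x \<noteq> 0})"
    using assms unfolding test_fun_def by (intro compact_Int_closed) auto
  ultimately have "compact (closure {x. c * f x \<noteq> 0})"
    by (simp add: Int_absorb1)
  then show ?thesis
    using assms supp unfolding test_fun_def by (auto intro: smooth_fun_cmult)
qed

lemma test_fun_support:
  assumes "test_fun D \<phi>"
  shows "compact (closure {x. \<phi> x \<noteq> 0})" "closure {x. \<phi> x \<noteq> 0} \<subseteq> D"
    and "\<And>x. x \<notin> closure {x. \<phi> x \<noteq> 0} \<Longrightarrow> \<phi> x = 0"
    and "\<And>x. x \<notin> closure {x. \<phi> x \<noteq> 0} \<Longrightarrow> grad \<phi> x = 0"
  using assms closure_subset[of "{x. \<phi> x \<noteq> 0}"] grad_eq_0_outside_support[of \<phi>]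
  unfolding test_fun_def by auto

lemma borel_measurable_test_fun: "test_fun D \<phi> \<Longrightarrow> \<phi> \<in> borel_measurable lborel"
  using borel_measurable_continuous_onI[OF continuous_on_smooth_fun] by (auto simp: test_fun_def)

lemma borel_measurable_grad_test_fun: "test_fun D \<phi> \<Longrightarrow> grad \<phi> \<in> borel_measurable lborel"
  using borel_measurable_continuous_onI[OF continuous_on_grad] by (auto simp: test_fun_def)

lemma set_integrable_dominated:
  fixes u :: "'a::euclidean_space \<Rightarrow> 'c::{banach,second_countable_topology}"
    and F :: "'a \<Rightarrow> 'e::{banach,second_countable_topology}"
  assumes "set_integrable lborel K u" "K \<subseteq> D" "D \<in> sets lborel"
    and "F \<in> borel_measurable lborel" "\<And>x. x \<in> K \<Longrightarrow> norm (F x) \<le> M * norm (u x)"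
    and "\<And>x. x \<notin> K \<Longrightarrow> F x = 0"
  shows "set_integrable lborel D F"
  unfolding set_integrable_def
proof (rule Bochner_Integration.integrable_bound)
  show "integrable lborel (\<lambda>x. indicator K x *\<^sub>R (M *\<^sub>R u x))"
    using set_integrable_scaleR_right[OF assms(1)] unfolding set_integrable_def .
  show "(\<lambda>x. indicator D x *\<^sub>R F x) \<in> borel_measurable lborel"
    using assms(3,4) by (intro borel_measurable_scaleR borel_measurable_indicator) auto
  have "norm (indicator D x *\<^sub>R F x) \<le> norm (indicator K x *\<^sub>R (M *\<^sub>R u x))" for x
  proof (cases "x \<in> K")
    case True
    then have "x \<in> D" using assms(2) by auto
    have "M * norm (u x) \<le> \<bar>M\<bar> * norm (u x)" by (simp add: mult_right_mono)
    then show ?thesis using True \<open>x \<in> D\<close> assms(5)[OF True] by simp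
  qed (use assms(6) in simp)
  then show "AE x in lborel. norm (indicator D x *\<^sub>R F x) \<le> norm (indicator K x *\<^sub>R (M *\<^sub>R u x))"
    by simp
qed

lemma bounded_on_compact:
  fixes f :: "'a::euclidean_space \<Rightarrow> 'b::real_normed_vector"
  assumes "continuous_on UNIV f" "compact K"
  obtains B where "\<And>x. x \<in> K \<Longrightarrow> norm (f x) \<le> B"
  using compact_imp_bounded[OF compact_continuous_image[OF continuous_on_subset[OF assms(1)] assms(2)]]
  unfolding bounded_iff by auto

lemma set_integrable_weak_grad_test_fun:
  assumes "weak_grad D u g" "test_fun D \<phi>" "open D"
  shows "set_integrable lborel D (\<lambda>x. u x *\<^sub>R grad \<phi> x)"
    and "set_integrable lborel D (\<lambda>x. \<phi> x *\<^sub>R g x)"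
proof -
  let ?K = "closure {x. \<phi> x \<noteq> 0}"
  have sm: "smooth_fun \<phi>" using assms(2) by (simp add: test_fun_def)
  have DK: "compact ?K" "?K \<subseteq> D" "D \<in> sets lborel"
    using test_fun_support(1,2)[OF assms(2)] assms(3) by auto
  have ui: "set_integrable lborel ?K u" and gi: "set_integrable lborel ?K g"
    and [measurable]: "u \<in> borel_measurable lborel" "g \<in> borel_measurable lborel"
    using assms(1) DK unfolding weak_grad_def by auto
  have [measurable]: "\<phi> \<in> borel_measurable lborel" "grad \<phi> \<in> borel_measurable lborel"
    using borel_measurable_test_fun borel_measurable_grad_test_fun assms(2) by auto
  obtain B where B: "\<And>x. x \<in> ?K \<Longrightarrow> norm (grad \<phi> x) \<le> B"
    using bounded_on_compact[OF continuous_on_grad[OF sm] DK(1)] by blast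
  show "set_integrable lborel D (\<lambda>x. u x *\<^sub>R grad \<phi> x)"
  proof (rule set_integrable_dominated[OF ui DK(2,3)])
    show "norm (u x *\<^sub>R grad \<phi> x) \<le> B * norm (u x)" if "x \<in> ?K" for x
      using mult_left_mono[OF B[OF that] abs_ge_zero[of "u x"]] by (simp add: mult.commute)
    show "u x *\<^sub>R grad \<phi> x = 0" if "x \<notin> ?K" for x
      using test_fun_support(4)[OF assms(2) that] by simp
  qed measurable
  obtain C where C: "\<And>x. x \<in> ?K \<Longrightarrow> norm (\<phi> x) \<le> C"
    using bounded_on_compact[OF continuous_on_smooth_fun[OF sm] DK(1)] by blast
  show "set_integrable lborel D (\<lambda>x. \<phi> x *\<^sub>R g x)"
  proof (rule set_integrable_dominated[OF gi DK(2,3)])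
    show "norm (\<phi> x *\<^sub>R g x) \<le> C * norm (g x)" if "x \<in> ?K" for x
      using C[OF that] by (simp add: mult_right_mono)
    show "\<phi> x *\<^sub>R g x = 0" if "x \<notin> ?K" for x
      using test_fun_support(3)[OF assms(2) that] by simp
  qed measurable
qed

lemma weak_grad_add:
  assumes "weak_grad D u1 g1" "weak_grad D u2 g2" "open D"
  shows "weak_grad D (\<lambda>x. u1 x + u2 x) (\<lambda>x. g1 x + g2 x)"
  unfolding weak_grad_def
proof (intro conjI allI impI)
  show "(\<lambda>x. u1 x + u2 x) \<in> borel_measurable lborel" "(\<lambda>x. g1 x + g2 x) \<in> borel_measurable lborel"
    using assms unfolding weak_grad_def by auto
  fix K :: "'a set" assume "compact K \<and> K \<subseteq> D"
  then show "set_integrable lborel K (\<lambda>x. u1 x + u2 x)" "set_integrable lborel K (\<lambda>x. g1 x + g2 x)"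
    using assms unfolding weak_grad_def by auto
next
  fix \<phi> assume tf: "test_fun D \<phi>"
  note int1 = set_integrable_weak_grad_test_fun[OF assms(1) tf assms(3)]
  note int2 = set_integrable_weak_grad_test_fun[OF assms(2) tf assms(3)]
  have "(\<integral>x\<in>D. (u1 x + u2 x) *\<^sub>R grad \<phi> x \<partial>lborel)
      = (\<integral>x\<in>D. u1 x *\<^sub>R grad \<phi> x \<partial>lborel) + (\<integral>x\<in>D. u2 x *\<^sub>R grad \<phi> x \<partial>lborel)"
    using set_integral_add(2)[OF int1(1) int2(1)] by (simp add: scaleR_add_left)
  also have "\<dots> = - ((\<integral>x\<in>D. \<phi> x *\<^sub>R g1 x \<partial>lborel) + (\<integral>x\<in>D. \<phi> x *\<^sub>R g2 x \<partial>lborel))"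
    using assms(1,2) tf unfolding weak_grad_def by simp
  also have "\<dots> = - (\<integral>x\<in>D. \<phi> x *\<^sub>R (g1 x + g2 x) \<partial>lborel)"
    using set_integral_add(2)[OF int1(2) int2(2)] by (simp add: scaleR_add_right)
  finally show "(\<integral>x\<in>D. (u1 x + u2 x) *\<^sub>R grad \<phi> x \<partial>lborel) = - (\<integral>x\<in>D. \<phi> x *\<^sub>R (g1 x + g2 x) \<partial>lborel)" .
qed

lemma weak_grad_cmult:
  assumes "weak_grad D u g"
  shows "weak_grad D (\<lambda>x. c * u x) (\<lambda>x. c *\<^sub>R g x)"
  unfolding weak_grad_def
proof (intro conjI allI impI)
  show "(\<lambda>x. c * u x) \<in> borel_measurable lborel" "(\<lambda>x. c *\<^sub>R g x) \<in> borel_measurable lborel"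
    using assms unfolding weak_grad_def by auto
  fix K :: "'a set" assume "compact K \<and> K \<subseteq> D"
  then show "set_integrable lborel K (\<lambda>x. c * u x)" "set_integrable lborel K (\<lambda>x. c *\<^sub>R g x)"
    using assms set_integrable_scaleR_right[of c lborel K u] set_integrable_scaleR_right[of c lborel K g]
    unfolding weak_grad_def by auto
next
  fix \<phi> assume "test_fun D \<phi>"
  then have "(\<integral>x\<in>D. u x *\<^sub>R grad \<phi> x \<partial>lborel) = - (\<integral>x\<in>D. \<phi> x *\<^sub>R g x \<partial>lborel)"
    using assms unfolding weak_grad_def by blast
  moreover have "(\<lambda>x. (c * u x) *\<^sub>R grad \<phi> x) = (\<lambda>x. c *\<^sub>R (u x *\<^sub>R grad \<phi> x))"
    and "(\<lambda>x. \<phi> x *\<^sub>R (c *\<^sub>R g x)) = (\<lambda>x. c *\<^sub>R (\<phi> x *\<^sub>R g x))"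
    by (simp_all add: fun_eq_iff scaleR_left_commute)
  ultimately show "(\<integral>x\<in>D. (c * u x) *\<^sub>R grad \<phi> x \<partial>lborel) = - (\<integral>x\<in>D. \<phi> x *\<^sub>R (c *\<^sub>R g x) \<partial>lborel)"
    by (simp only: set_integral_scaleR_right) simp
qed

definition sq_norm_integral :: "'a::euclidean_space set \<Rightarrow> ('a \<Rightarrow> 'c::real_normed_vector) \<Rightarrow> ennreal" where
  "sq_norm_integral D f = (\<integral>\<^sup>+x\<in>D. ennreal ((norm (f x))\<^sup>2) \<partial>lborel)"

lemma sq_norm_integral_add_le:
  fixes f g :: "'a::euclidean_space \<Rightarrow> 'c::euclidean_space"
  assumes [measurable]: "f \<in> borel_measurable lborel" "g \<in> borel_measurable lborel" "D \<in> sets lborel"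
  shows "sq_norm_integral D (\<lambda>x. f x + g x) \<le> 2 * sq_norm_integral D f + 2 * sq_norm_integral D g"
proof -
  have "ennreal ((norm (f x + g x))\<^sup>2) \<le> 2 * ennreal ((norm (f x))\<^sup>2) + 2 * ennreal ((norm (g x))\<^sup>2)" for x
  proof -
    have "(norm (f x + g x))\<^sup>2 \<le> (norm (f x) + norm (g x))\<^sup>2"
      by (intro power_mono norm_triangle_ineq) auto
    also have "\<dots> \<le> 2 * (norm (f x))\<^sup>2 + 2 * (norm (g x))\<^sup>2"
      using zero_le_power2[of "norm (f x) - norm (g x)"] unfolding power2_diff power2_sum by linarith
    finally have "ennreal ((norm (f x + g x))\<^sup>2) \<le> ennreal (2 * (norm (f x))\<^sup>2 + 2 * (norm (g x))\<^sup>2)"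
      by (rule ennreal_leI)
    then show ?thesis
      by (subst (asm) ennreal_plus) (auto simp: ennreal_mult')
  qed
  then have "sq_norm_integral D (\<lambda>x. f x + g x)
      \<le> (\<integral>\<^sup>+x. 2 * (ennreal ((norm (f x))\<^sup>2) * indicator D x) + 2 * (ennreal ((norm (g x))\<^sup>2) * indicator D x) \<partial>lborel)"
    unfolding sq_norm_integral_def
    by (intro nn_integral_mono) (simp add: indicator_def distrib_left)
  also have "\<dots> = 2 * sq_norm_integral D f + 2 * sq_norm_integral D g"
    by (simp add: sq_norm_integral_def nn_integral_add nn_integral_cmult)
  finally show ?thesis .
qed

lemma sq_norm_integral_scaleR:
  fixes f :: "'a::euclidean_space \<Rightarrow> 'c::euclidean_space"
  assumes [measurable]: "f \<in> borel_measurable lborel" "D \<in> sets lborel"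
  shows "sq_norm_integral D (\<lambda>x. c *\<^sub>R f x) = ennreal (c\<^sup>2) * sq_norm_integral D f"
proof -
  have "sq_norm_integral D (\<lambda>x. c *\<^sub>R f x) = (\<integral>\<^sup>+x. ennreal (c\<^sup>2) * (ennreal ((norm (f x))\<^sup>2) * indicator D x) \<partial>lborel)"
    unfolding sq_norm_integral_def by (simp add: ennreal_mult' power_mult_distrib mult.assoc)
  also have "\<dots> = ennreal (c\<^sup>2) * sq_norm_integral D f"
    unfolding sq_norm_integral_def by (rule nn_integral_cmult) measurable
  finally show ?thesis .
qed

lemma sq_norm_integral_add_finite:
  fixes f g :: "'a::euclidean_space \<Rightarrow> 'c::euclidean_space"
  assumes "f \<in> borel_measurable lborel" "g \<in> borel_measurable lborel" "D \<in> sets lborel"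
    and "sq_norm_integral D f < \<infinity>" "sq_norm_integral D g < \<infinity>"
  shows "sq_norm_integral D (\<lambda>x. f x + g x) < \<infinity>"
  using sq_norm_integral_add_le[OF assms(1-3)] assms(4,5)
  by (simp add: ennreal_mult_less_top order.strict_trans1)

lemma tendsto_sq_norm_integral_add:
  fixes f g :: "nat \<Rightarrow> 'a::euclidean_space \<Rightarrow> 'c::euclidean_space"
  assumes "\<And>n. f n \<in> borel_measurable lborel" "\<And>n. g n \<in> borel_measurable lborel" "D \<in> sets lborel"
    and "(\<lambda>n. sq_norm_integral D (f n)) \<longlonglongrightarrow> 0" "(\<lambda>n. sq_norm_integral D (g n)) \<longlonglongrightarrow> 0"
  shows "(\<lambda>n. sq_norm_integral D (\<lambda>x. f n x + g n x)) \<longlonglongrightarrow> 0"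
proof (rule tendsto_sandwich[where f="\<lambda>_. 0"])
  show "\<forall>\<^sub>F n in sequentially. sq_norm_integral D (\<lambda>x. f n x + g n x)
          \<le> 2 * sq_norm_integral D (f n) + 2 * sq_norm_integral D (g n)"
    by (intro always_eventually allI sq_norm_integral_add_le assms(1-3))
  show "(\<lambda>n. 2 * sq_norm_integral D (f n) + 2 * sq_norm_integral D (g n)) \<longlonglongrightarrow> 0"
    using tendsto_add[OF ennreal_tendsto_cmult[OF _ assms(4)] ennreal_tendsto_cmult[OF _ assms(5)]]
    by simp
qed simp_all

lemma tendsto_sq_norm_integral_scaleR:
  fixes f :: "nat \<Rightarrow> 'a::euclidean_space \<Rightarrow> 'c::euclidean_space"
  assumes "\<And>n. f n \<in> borel_measurable lborel" "D \<in> sets lborel"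
    and "(\<lambda>n. sq_norm_integral D (f n)) \<longlonglongrightarrow> 0"
  shows "(\<lambda>n. sq_norm_integral D (\<lambda>x. c *\<^sub>R f n x)) \<longlonglongrightarrow> 0"
  using ennreal_tendsto_cmult[OF _ assms(3), of "ennreal (c\<^sup>2)"]
  by (simp add: sq_norm_integral_scaleR[OF assms(1,2)])

definition H10_grad :: "'a::euclidean_space set \<Rightarrow> ('a \<Rightarrow> real) \<Rightarrow> ('a \<Rightarrow> 'a) \<Rightarrow> bool" where
  "H10_grad D u g \<longleftrightarrow> weak_grad D u g \<and> sq_norm_integral D u < \<infinity> \<and> sq_norm_integral D g < \<infinity> \<and>
     (\<exists>\<phi>. (\<forall>n. test_fun D (\<phi> n)) \<and>
        (\<lambda>n. sq_norm_integral D (\<lambda>x. \<phi> n x - u x)) \<longlonglongrightarrow> 0 \<and>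
        (\<lambda>n. sq_norm_integral D (\<lambda>x. grad (\<phi> n) x - g x)) \<longlonglongrightarrow> 0)"

lemma H10_iff_H10_grad: "H10 D u \<longleftrightarrow> (\<exists>g. H10_grad D u g)"
  by (simp add: H10_def H10_grad_def sq_norm_integral_def)

lemma H10_grad_zero: "H10_grad D (\<lambda>x. 0) (\<lambda>x. 0)"
  unfolding H10_grad_def weak_grad_def sq_norm_integral_def
  by (auto intro!: exI[of _ "\<lambda>n x. 0"] simp: test_fun_zero grad_def set_integrable_def)

lemma H10_grad_cmult:
  assumes "H10_grad D u g" "D \<in> sets lborel"
  shows "H10_grad D (\<lambda>x. c * u x) (\<lambda>x. c *\<^sub>R g x)"
proof -
  from assms(1) obtain \<phi> where wg: "weak_grad D u g"
    and fin: "sq_norm_integral D u < \<infinity>" "sq_norm_integral D g < \<infinity>"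
    and tf: "\<And>n. test_fun D (\<phi> n)"
    and lim: "(\<lambda>n. sq_norm_integral D (\<lambda>x. \<phi> n x - u x)) \<longlonglongrightarrow> 0"
      "(\<lambda>n. sq_norm_integral D (\<lambda>x. grad (\<phi> n) x - g x)) \<longlonglongrightarrow> 0"
    unfolding H10_grad_def by blast
  have [measurable]: "u \<in> borel_measurable lborel" "g \<in> borel_measurable lborel"
    using wg unfolding weak_grad_def by auto
  have [measurable]: "\<phi> n \<in> borel_measurable lborel" "grad (\<phi> n) \<in> borel_measurable lborel" for n
    by (blast intro: borel_measurable_test_fun borel_measurable_grad_test_fun tf)+
  have "(\<lambda>x. c * \<phi> n x - c * u x) = (\<lambda>x. c *\<^sub>R (\<phi> n x - u x))"
    and "(\<lambda>x. grad (\<lambda>x. c * \<phi> n x) x - c *\<^sub>R g x) = (\<lambda>x. c *\<^sub>R (grad (\<phi> n) x - g x))" for n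
    using tf by (simp_all add: fun_eq_iff grad_cmult test_fun_def right_diff_distrib scaleR_diff_right)
  moreover have "(\<lambda>n. sq_norm_integral D (\<lambda>x. c *\<^sub>R (\<phi> n x - u x))) \<longlonglongrightarrow> 0"
    and "(\<lambda>n. sq_norm_integral D (\<lambda>x. c *\<^sub>R (grad (\<phi> n) x - g x))) \<longlonglongrightarrow> 0"
    by (intro tendsto_sq_norm_integral_scaleR lim assms(2); measurable)+
  moreover have "sq_norm_integral D (\<lambda>x. c * u x) < \<infinity>"
    and "sq_norm_integral D (\<lambda>x. c *\<^sub>R g x) < \<infinity>"
    using sq_norm_integral_scaleR[of u D c] sq_norm_integral_scaleR[of g D c] fin assms(2)
    by (simp_all add: ennreal_mult_less_top)
  ultimately show ?thesis
    unfolding H10_grad_def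
    using weak_grad_cmult[OF wg] test_fun_cmult[OF tf] by (intro conjI exI[of _ "\<lambda>n x. c * \<phi> n x"]) auto
qed

lemma H10_grad_add:
  assumes "H10_grad D u1 g1" "H10_grad D u2 g2" "open D"
  shows "H10_grad D (\<lambda>x. u1 x + u2 x) (\<lambda>x. g1 x + g2 x)"
proof -
  have Dm [measurable]: "D \<in> sets lborel" using assms(3) by simp
  from assms(1) obtain \<phi>1 where wg1: "weak_grad D u1 g1"
    and fin1: "sq_norm_integral D u1 < \<infinity>" "sq_norm_integral D g1 < \<infinity>"
    and tf1: "\<And>n. test_fun D (\<phi>1 n)"
    and lim1: "(\<lambda>n. sq_norm_integral D (\<lambda>x. \<phi>1 n x - u1 x)) \<longlonglongrightarrow> 0"
      "(\<lambda>n. sq_norm_integral D (\<lambda>x. grad (\<phi>1 n) x - g1 x)) \<longlonglongrightarrow> 0"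
    unfolding H10_grad_def by blast
  from assms(2) obtain \<phi>2 where wg2: "weak_grad D u2 g2"
    and fin2: "sq_norm_integral D u2 < \<infinity>" "sq_norm_integral D g2 < \<infinity>"
    and tf2: "\<And>n. test_fun D (\<phi>2 n)"
    and lim2: "(\<lambda>n. sq_norm_integral D (\<lambda>x. \<phi>2 n x - u2 x)) \<longlonglongrightarrow> 0"
      "(\<lambda>n. sq_norm_integral D (\<lambda>x. grad (\<phi>2 n) x - g2 x)) \<longlonglongrightarrow> 0"
    unfolding H10_grad_def by blast
  have [measurable]: "u1 \<in> borel_measurable lborel" "g1 \<in> borel_measurable lborel"
    "u2 \<in> borel_measurable lborel" "g2 \<in> borel_measurable lborel"
    using wg1 wg2 unfolding weak_grad_def by auto
  have [measurable]: "\<phi>1 n \<in> borel_measurable lborel" "grad (\<phi>1 n) \<in> borel_measurable lborel"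
    "\<phi>2 n \<in> borel_measurable lborel" "grad (\<phi>2 n) \<in> borel_measurable lborel" for n
    by (blast intro: borel_measurable_test_fun borel_measurable_grad_test_fun tf1 tf2)+
  have "(\<lambda>x. \<phi>1 n x + \<phi>2 n x - (u1 x + u2 x)) = (\<lambda>x. (\<phi>1 n x - u1 x) + (\<phi>2 n x - u2 x))"
    and "(\<lambda>x. grad (\<lambda>x. \<phi>1 n x + \<phi>2 n x) x - (g1 x + g2 x))
           = (\<lambda>x. (grad (\<phi>1 n) x - g1 x) + (grad (\<phi>2 n) x - g2 x))" for n
    using tf1 tf2 by (simp_all add: fun_eq_iff grad_add test_fun_def)
  moreover have "(\<lambda>n. sq_norm_integral D (\<lambda>x. (\<phi>1 n x - u1 x) + (\<phi>2 n x - u2 x))) \<longlonglongrightarrow> 0"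
    and "(\<lambda>n. sq_norm_integral D (\<lambda>x. (grad (\<phi>1 n) x - g1 x) + (grad (\<phi>2 n) x - g2 x))) \<longlonglongrightarrow> 0"
    by (intro tendsto_sq_norm_integral_add lim1 lim2 Dm; measurable)+
  moreover have "sq_norm_integral D (\<lambda>x. u1 x + u2 x) < \<infinity>"
    and "sq_norm_integral D (\<lambda>x. g1 x + g2 x) < \<infinity>"
    by (intro sq_norm_integral_add_finite fin1 fin2 Dm; measurable)+
  ultimately show ?thesis
    unfolding H10_grad_def using weak_grad_add[OF wg1 wg2 assms(3)] test_fun_add[OF tf1 tf2]
    by (intro conjI exI[of _ "\<lambda>n x. \<phi>1 n x + \<phi>2 n x"]) auto
qed

lemma H10_grad_sum:
  fixes n :: nat
  assumes "\<And>i. i < n \<Longrightarrow> H10_grad D (v i) (g i)" "open D"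
  shows "H10_grad D (\<lambda>x. \<Sum>i<n. a i * v i x) (\<lambda>x. \<Sum>i<n. a i *\<^sub>R g i x)"
  using assms(1)
proof (induction n)
  case 0
  then show ?case using H10_grad_zero by simp
next
  case (Suc n)
  have "H10_grad D (\<lambda>x. (\<Sum>i<n. a i * v i x) + a n * v n x) (\<lambda>x. (\<Sum>i<n. a i *\<^sub>R g i x) + a n *\<^sub>R g n x)"
    using Suc assms(2) by (intro H10_grad_add H10_grad_cmult) auto
  then show ?case by simp
qed

lemma power2_norm_sum_scaleR_le:
  fixes z :: "nat \<Rightarrow> 'c::real_normed_vector"
  shows "(norm (\<Sum>i<n. a i *\<^sub>R z i))\<^sup>2 \<le> real n * (\<Sum>i<n. (a i)\<^sup>2 * (norm (z i))\<^sup>2)"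
proof -
  have "norm (\<Sum>i<n. a i *\<^sub>R z i) \<le> (\<Sum>i<n. \<bar>a i\<bar> * norm (z i))"
    by (rule order.trans[OF norm_sum]) simp
  then have "(norm (\<Sum>i<n. a i *\<^sub>R z i))\<^sup>2 \<le> (\<Sum>i<n. (\<bar>a i\<bar> * norm (z i)) * 1)\<^sup>2"
    by (intro power_mono) auto
  also have "\<dots> \<le> (\<Sum>i<n. (\<bar>a i\<bar> * norm (z i))\<^sup>2) * (\<Sum>i<n. 1\<^sup>2)"
    by (rule Cauchy_Schwarz_ineq_sum)
  also have "\<dots> = real n * (\<Sum>i<n. (a i)\<^sup>2 * (norm (z i))\<^sup>2)"
    by (simp add: power_mult_distrib)
  finally show ?thesis .
qed

lemma sq_norm_integral_sum_le:
  fixes g :: "nat \<Rightarrow> 'a::euclidean_space \<Rightarrow> 'c::euclidean_space"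
  assumes "\<And>i. i < n \<Longrightarrow> g i \<in> borel_measurable lborel" "D \<in> sets lborel"
  shows "sq_norm_integral D (\<lambda>x. \<Sum>i<n. a i *\<^sub>R g i x)
           \<le> (\<Sum>i<n. ennreal (real n * (a i)\<^sup>2) * sq_norm_integral D (g i))"
proof -
  have meas: "(\<lambda>x. b * (ennreal ((norm (g i x))\<^sup>2) * indicator D x)) \<in> borel_measurable borel"
    if "i < n" for i and b :: ennreal
  proof -
    have [measurable]: "g i \<in> borel_measurable borel" "D \<in> sets borel"
      using assms(1)[OF that] assms(2) by simp_all
    show ?thesis by measurable
  qed
  have "ennreal ((norm (\<Sum>i<n. a i *\<^sub>R g i x))\<^sup>2) * indicator D x
      \<le> (\<Sum>i<n. ennreal (real n * (a i)\<^sup>2) * (ennreal ((norm (g i x))\<^sup>2) * indicator D x))" for x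
  proof -
    have "(norm (\<Sum>i<n. a i *\<^sub>R g i x))\<^sup>2 \<le> (\<Sum>i<n. real n * (a i)\<^sup>2 * (norm (g i x))\<^sup>2)"
      using power2_norm_sum_scaleR_le[where a=a and n=n and z="\<lambda>i. g i x"]
      by (simp add: sum_distrib_left mult.assoc)
    then have "ennreal ((norm (\<Sum>i<n. a i *\<^sub>R g i x))\<^sup>2)
        \<le> (\<Sum>i<n. ennreal (real n * (a i)\<^sup>2) * ennreal ((norm (g i x))\<^sup>2))"
      by (subst ennreal_mult[symmetric] sum_ennreal; simp add: ennreal_leI)+
    then show ?thesis
      by (cases "x \<in> D") auto
  qed
  then have "sq_norm_integral D (\<lambda>x. \<Sum>i<n. a i *\<^sub>R g i x)
      \<le> (\<integral>\<^sup>+x. (\<Sum>i<n. ennreal (real n * (a i)\<^sup>2) * (ennreal ((norm (g i x))\<^sup>2) * indicator D x)) \<partial>lborel)"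
    unfolding sq_norm_integral_def by (intro nn_integral_mono)
  also have "\<dots> = (\<Sum>i<n. ennreal (real n * (a i)\<^sup>2) * sq_norm_integral D (g i))"
    unfolding sq_norm_integral_def
    by (subst nn_integral_sum) (auto intro!: sum.cong nn_integral_cmult meas[where b=1, simplified] meas)
  finally show ?thesis .
qed

lemma nn_integral_weighted_sq_norm_integral_sum_finite:
  fixes g :: "nat \<Rightarrow> 'a::euclidean_space \<Rightarrow> 'c::euclidean_space"
  assumes "\<And>i. i < n \<Longrightarrow> g i \<in> borel_measurable lborel" "D \<in> sets lborel"
    and "\<And>i. i < n \<Longrightarrow> sq_norm_integral D (g i) < \<infinity>"
    and "\<And>y. 0 \<le> \<gamma> y" "\<gamma> \<in> borel_measurable M" "\<And>i. i < n \<Longrightarrow> w i \<in> borel_measurable M"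
    and "\<And>i. i < n \<Longrightarrow> (\<integral>\<^sup>+y. ennreal (\<gamma> y * (w i y)\<^sup>2) \<partial>M) < \<infinity>"
  shows "(\<integral>\<^sup>+y. ennreal (\<gamma> y) * sq_norm_integral D (\<lambda>x. \<Sum>i<n. (c i * w i y) *\<^sub>R g i x) \<partial>M) < \<infinity>"
proof -
  define K where "K i = ennreal (real n * (c i)\<^sup>2)" for i
  have meas: "(\<lambda>y. a * (ennreal (\<gamma> y * (w i y)\<^sup>2) * b)) \<in> borel_measurable M"
    if "i < n" for i and a b :: ennreal
  proof -
    have [measurable]: "\<gamma> \<in> borel_measurable M" "w i \<in> borel_measurable M"
      using assms(5) assms(6)[OF that] by simp_all
    show ?thesis by measurable
  qed
  have "ennreal (\<gamma> y) * sq_norm_integral D (\<lambda>x. \<Sum>i<n. (c i * w i y) *\<^sub>R g i x)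
      \<le> ennreal (\<gamma> y) * (\<Sum>i<n. ennreal (real n * (c i * w i y)\<^sup>2) * sq_norm_integral D (g i))" for y
    by (intro mult_left_mono sq_norm_integral_sum_le assms(1,2)) auto
  also have "ennreal (\<gamma> y) * (\<Sum>i<n. ennreal (real n * (c i * w i y)\<^sup>2) * sq_norm_integral D (g i))
      = (\<Sum>i<n. K i * (ennreal (\<gamma> y * (w i y)\<^sup>2) * sq_norm_integral D (g i)))" for y
  proof -
    have "ennreal (\<gamma> y) * ennreal (real n * (c i * w i y)\<^sup>2) = K i * ennreal (\<gamma> y * (w i y)\<^sup>2)" for i
      using assms(4)[of y] by (simp add: K_def ennreal_mult[symmetric] power_mult_distrib mult_ac)
    then show ?thesis
      by (simp add: sum_distrib_left mult.assoc[symmetric])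
  qed
  finally have "(\<integral>\<^sup>+y. ennreal (\<gamma> y) * sq_norm_integral D (\<lambda>x. \<Sum>i<n. (c i * w i y) *\<^sub>R g i x) \<partial>M)
      \<le> (\<integral>\<^sup>+y. (\<Sum>i<n. K i * (ennreal (\<gamma> y * (w i y)\<^sup>2) * sq_norm_integral D (g i))) \<partial>M)"
    by (intro nn_integral_mono)
  also have "\<dots> = (\<Sum>i<n. K i * ((\<integral>\<^sup>+y. ennreal (\<gamma> y * (w i y)\<^sup>2) \<partial>M) * sq_norm_integral D (g i)))"
    using meas meas[where a=1 and b=1, simplified] meas[where a=1, simplified]
    by (subst nn_integral_sum) (auto intro!: sum.cong simp: nn_integral_cmult nn_integral_multc)
  also have "\<dots> < \<infinity>"
    using assms(3,7) by (auto simp: K_def ennreal_mult_less_top)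
  finally show ?thesis .
qed

lemma tensor_space_subset_Xgamma:
  fixes D :: "'a::euclidean_space set" and \<Gamma> :: "'b measure"
  assumes "open D"
    and "\<And>y. 0 \<le> \<gamma> y" "\<gamma> \<in> borel_measurable \<Gamma>"
    and V: "\<And>v. v \<in> V \<Longrightarrow> H10 D v"
    and W: "\<And>w. w \<in> W \<Longrightarrow> w \<in> borel_measurable \<Gamma>"
      "\<And>w. w \<in> W \<Longrightarrow> (\<integral>\<^sup>+y. ennreal (\<gamma> y * (w y)\<^sup>2) \<partial>\<Gamma>) < \<infinity>"
  shows "tensor_space V W \<subseteq> Xgamma D \<Gamma> \<gamma>"
proof
  fix f assume "f \<in> tensor_space V W"
  then obtain n :: nat and c v w where vw: "\<And>i. i < n \<Longrightarrow> v i \<in> V \<and> w i \<in> W"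
    and f: "f = (\<lambda>(x, y). \<Sum>i<n. c i * v i x * w i y)"
    unfolding tensor_space_def by blast
  have "\<forall>i. \<exists>g. i < n \<longrightarrow> H10_grad D (v i) g"
    using V vw H10_iff_H10_grad by blast
  then obtain g where g: "\<And>i. i < n \<Longrightarrow> H10_grad D (v i) (g i)"
    by metis
  have gm: "\<And>i. i < n \<Longrightarrow> g i \<in> borel_measurable lborel"
    and gfin: "\<And>i. i < n \<Longrightarrow> sq_norm_integral D (g i) < \<infinity>"
    using g unfolding H10_grad_def weak_grad_def by auto
  have wm: "\<And>i. i < n \<Longrightarrow> w i \<in> borel_measurable \<Gamma>"
    using W(1) vw by blast
  define G where "G = (\<lambda>(x, y). \<Sum>i<n. (c i * w i y) *\<^sub>R g i x)"
  show "f \<in> Xgamma D \<Gamma> \<gamma>"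
    unfolding Xgamma_def
  proof (intro CollectI exI[of _ G] conjI)
    show "G \<in> borel_measurable (lborel \<Otimes>\<^sub>M \<Gamma>)"
      unfolding G_def split_beta'
      by (intro borel_measurable_sum borel_measurable_scaleR borel_measurable_times borel_measurable_const
          measurable_compose[OF measurable_snd wm] measurable_compose[OF measurable_fst gm]) auto
    show "AE y in \<Gamma>. H10 D (\<lambda>x. f (x, y)) \<and> weak_grad D (\<lambda>x. f (x, y)) (\<lambda>x. G (x, y))"
    proof (rule AE_I2)
      fix y
      have "H10_grad D (\<lambda>x. \<Sum>i<n. (c i * w i y) * v i x) (\<lambda>x. \<Sum>i<n. (c i * w i y) *\<^sub>R g i x)"
        by (rule H10_grad_sum[OF g assms(1)])
      moreover have "(\<lambda>x. f (x, y)) = (\<lambda>x. \<Sum>i<n. (c i * w i y) * v i x)"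
        by (simp add: f mult_ac)
      moreover have "(\<lambda>x. G (x, y)) = (\<lambda>x. \<Sum>i<n. (c i * w i y) *\<^sub>R g i x)"
        by (simp add: G_def)
      ultimately have "H10_grad D (\<lambda>x. f (x, y)) (\<lambda>x. G (x, y))"
        by simp
      then show "H10 D (\<lambda>x. f (x, y)) \<and> weak_grad D (\<lambda>x. f (x, y)) (\<lambda>x. G (x, y))"
        unfolding H10_iff_H10_grad H10_grad_def by blast
    qed
    show "(\<integral>\<^sup>+y. ennreal (\<gamma> y) * (\<integral>\<^sup>+x\<in>D. ennreal ((norm (G (x, y)))\<^sup>2) \<partial>lborel) \<partial>\<Gamma>) < \<infinity>"
      using nn_integral_weighted_sq_norm_integral_sum_finite[OF gm _ gfin assms(2,3) wm W(2)] vw assms(1)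
      by (simp add: G_def sq_norm_integral_def)
  qed
qed

lemma nn_integral_mult_power2_finite_Young:
  assumes "r \<ge> 1" "s \<ge> 2" "2 / s + 1 / r = 1"
    and "\<gamma> \<in> Lp_Gamma M r" "w \<in> Lp_Gamma M s"
  shows "(\<integral>\<^sup>+y. ennreal (\<gamma> y * (w y)\<^sup>2) \<partial>M) < \<infinity>"
proof -
  \<comment> \<open>The endpoint \<open>r = 1\<close> would need \<open>s = \<infinity>\<close>, so both exponents are strictly inside.\<close>
  have "r \<noteq> 1" "s \<noteq> 2"
    using assms(1-3) by auto
  then have r: "r > 1" and q: "s / 2 > 1"
    using assms(1,2) by auto
  have rq: "1 / r + 1 / (s / 2) = 1"
    using assms(3) by simp
  have [measurable]: "\<gamma> \<in> borel_measurable M" "w \<in> borel_measurable M"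
    and fin: "(\<integral>\<^sup>+y. ennreal (\<bar>\<gamma> y\<bar> powr r) \<partial>M) < \<infinity>" "(\<integral>\<^sup>+y. ennreal (\<bar>w y\<bar> powr s) \<partial>M) < \<infinity>"
    using assms(4,5) by (auto simp: Lp_Gamma_def)
  have pointwise: "ennreal (\<gamma> y * (w y)\<^sup>2)
      \<le> ennreal (1 / r) * ennreal (\<bar>\<gamma> y\<bar> powr r) + ennreal (2 / s) * ennreal (\<bar>w y\<bar> powr s)" for y
  proof -
    have "((w y)\<^sup>2) powr (s / 2) = \<bar>w y\<bar> powr s"
      using powr_powr[of "\<bar>w y\<bar>" 2 "s / 2"] by simp
    then have "\<bar>\<gamma> y\<bar> * (w y)\<^sup>2 \<le> \<bar>\<gamma> y\<bar> powr r / r + \<bar>w y\<bar> powr s / (s / 2)"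
      using Youngs_inequality[OF r q rq, of "\<bar>\<gamma> y\<bar>" "(w y)\<^sup>2"] by simp
    then have "\<gamma> y * (w y)\<^sup>2 \<le> (1 / r) * \<bar>\<gamma> y\<bar> powr r + (2 / s) * \<bar>w y\<bar> powr s"
      using mult_right_mono[OF abs_ge_self[of "\<gamma> y"] zero_le_power2[of "w y"]] by (simp add: ac_simps)
    then have "ennreal (\<gamma> y * (w y)\<^sup>2) \<le> ennreal ((1 / r) * \<bar>\<gamma> y\<bar> powr r + (2 / s) * \<bar>w y\<bar> powr s)"
      by (rule ennreal_leI)
    also have "\<dots> = ennreal (1 / r) * ennreal (\<bar>\<gamma> y\<bar> powr r) + ennreal (2 / s) * ennreal (\<bar>w y\<bar> powr s)"
      using r q by (subst ennreal_plus) (auto simp: ennreal_mult'[symmetric])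
    finally show ?thesis .
  qed
  have "(\<integral>\<^sup>+y. ennreal (\<gamma> y * (w y)\<^sup>2) \<partial>M)
      \<le> (\<integral>\<^sup>+y. ennreal (1 / r) * ennreal (\<bar>\<gamma> y\<bar> powr r) + ennreal (2 / s) * ennreal (\<bar>w y\<bar> powr s) \<partial>M)"
    by (intro nn_integral_mono pointwise)
  also have "\<dots> = ennreal (1 / r) * (\<integral>\<^sup>+y. ennreal (\<bar>\<gamma> y\<bar> powr r) \<partial>M) + ennreal (2 / s) * (\<integral>\<^sup>+y. ennreal (\<bar>w y\<bar> powr s) \<partial>M)"
    by (simp add: nn_integral_add nn_integral_cmult)
  also have "\<dots> < \<infinity>"
    using fin by (simp add: ennreal_mult_less_top)
  finally show ?thesis .
qed

lemma nn_integral_mult_power2_finite_bounded: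
  assumes "\<gamma> \<in> Lp_Gamma M 1" "w \<in> Linf_Gamma M"
  shows "(\<integral>\<^sup>+y. ennreal (\<gamma> y * (w y)\<^sup>2) \<partial>M) < \<infinity>"
proof -
  obtain C where C: "AE y in M. \<bar>w y\<bar> \<le> C"
    using assms(2) by (auto simp: Linf_Gamma_def)
  have [measurable]: "\<gamma> \<in> borel_measurable M" and fin: "(\<integral>\<^sup>+y. ennreal \<bar>\<gamma> y\<bar> \<partial>M) < \<infinity>"
    using assms(1) by (auto simp: Lp_Gamma_def)
  have "(\<integral>\<^sup>+y. ennreal (\<gamma> y * (w y)\<^sup>2) \<partial>M) \<le> (\<integral>\<^sup>+y. ennreal (C\<^sup>2) * ennreal \<bar>\<gamma> y\<bar> \<partial>M)"
  proof (rule nn_integral_mono_AE)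
    show "AE y in M. ennreal (\<gamma> y * (w y)\<^sup>2) \<le> ennreal (C\<^sup>2) * ennreal \<bar>\<gamma> y\<bar>"
      using C
    proof eventually_elim
      case (elim y)
      have "(w y)\<^sup>2 \<le> C\<^sup>2"
        using power_mono[OF elim abs_ge_zero, of 2] by simp
      then have "\<gamma> y * (w y)\<^sup>2 \<le> C\<^sup>2 * \<bar>\<gamma> y\<bar>"
        by (metis abs_ge_self abs_ge_zero mult.commute mult_mono zero_le_power2)
      then show ?case by (simp add: ennreal_mult'[symmetric] ennreal_leI)
    qed
  qed
  also have "\<dots> < \<infinity>"
    using fin by (simp add: nn_integral_cmult ennreal_mult_less_top)
  finally show ?thesis .
qed

theorem lemma10:
  fixes D :: "'a::euclidean_space set"
    and \<Gamma> :: "'b::euclidean_space measure"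
    and \<gamma> :: "'b \<Rightarrow> real"
    and V :: "('a \<Rightarrow> real) set"
    and W :: "('b \<Rightarrow> real) set"
  assumes "bounded D" and "open D"
    and "prob_space \<Gamma>" and "sets \<Gamma> = sets borel"
    and "\<And>y. \<gamma> y > 0" and "\<gamma> \<in> borel_measurable \<Gamma>"
    and "\<And>v. v \<in> V \<Longrightarrow> H10 D v"
    and "W \<subseteq> Lp_Gamma \<Gamma> 2"
  shows "(\<forall>r s::real. r \<ge> 1 \<and> s \<ge> 2 \<and> 2 / s + 1 / r = 1 \<and>
            \<gamma> \<in> Lp_Gamma \<Gamma> r \<and> W \<subseteq> Lp_Gamma \<Gamma> s
            \<longrightarrow> tensor_space V W \<subseteq> Xgamma D \<Gamma> \<gamma>)
       \<and> (\<gamma> \<in> Lp_Gamma \<Gamma> 1 \<and> W \<subseteq> Linf_Gamma \<Gamma>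
            \<longrightarrow> tensor_space V W \<subseteq> Xgamma D \<Gamma> \<gamma>)"
proof -
  have \<gamma>: "\<And>y. 0 \<le> \<gamma> y"
    using assms(5) less_imp_le by blast
  have Wm: "\<And>w. w \<in> W \<Longrightarrow> w \<in> borel_measurable \<Gamma>"
    using assms(8) by (auto simp: Lp_Gamma_def)
  note tensor = tensor_space_subset_Xgamma[OF assms(2) \<gamma> assms(6,7) Wm]
  show ?thesis
  proof (intro conjI allI impI)
    fix r s :: real
    assume "r \<ge> 1 \<and> s \<ge> 2 \<and> 2 / s + 1 / r = 1 \<and> \<gamma> \<in> Lp_Gamma \<Gamma> r \<and> W \<subseteq> Lp_Gamma \<Gamma> s"
    then show "tensor_space V W \<subseteq> Xgamma D \<Gamma> \<gamma>"
      by (intro tensor nn_integral_mult_power2_finite_Young[of r s]) auto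
  next
    assume "\<gamma> \<in> Lp_Gamma \<Gamma> 1 \<and> W \<subseteq> Linf_Gamma \<Gamma>"
    then show "tensor_space V W \<subseteq> Xgamma D \<Gamma> \<gamma>"
      by (intro tensor nn_integral_mult_power2_finite_bounded) auto
  qed
qed

end
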